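(* Let $\mathbf{A}\in\mathbb{R}^{m\times n}$, $l=\min\{m,n\}$, $r=\mathrm{rank}(\mathbf{A})$, $\mu,\nu\in[0,\infty)$, and define $\lambda\in[0,\infty]$ by $\lambda^2=0$ if $\mu=0$; $\lambda^2=\mu^2/|\mathbf{A}\mathbf{A}^T|^\nu$ if $\mu>0$ and $|\mathbf{A}\mathbf{A}^T|^\nu>0$; and $\lambda^2=\infty$ if $\mu>0$ and $|\mathbf{A}\mathbf{A}^T|^\nu=0$. Let $\sigma_1\ge\cdots\ge\sigma_l\ge0$ be the singular values of $\mathbf{A}$. Then $\|\mathbf{A}^{*(\lambda)}\|\le\min\{M_1,M_2\}$, where $M_1=0$ if $\mathbf{A}=\mathbf{0}$ and $M_1=1/\sigma_r$ if $\mathbf{A}\neq\mathbf{0}$, and $M_2=\infty$ if $\mu=0$ and $M_2=\frac{1}{2\mu}\prod_{i=1}^l\sigma_i^\nu$ if $\mu>0$. Moreover, if $\mu>0$ then $\|\mathbf{A}^{*(\lambda)}\|\le\frac{1}{2\mu}\|\mathbf{A}\|^{\nu l}$.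
   Context: $|\cdot|$ denotes the determinant, with the convention $0^0=1$. $\|\cdot\|$ is the spectral norm. For $\lambda\in[0,\infty]$ the (extended) damped pseudoinverse is $\mathbf{A}^{*(\lambda)}=\mathbf{A}^T(\mathbf{A}\mathbf{A}^T+\lambda^2\mathbf{I}_m)^+$ if $\lambda<\infty$ and $\mathbf{A}^{*(\infty)}=\mathbf{0}\in\mathbb{R}^{n\times m}$, where ${}^+$ is the Moore–Penrose pseudoinverse. *)

theory Defs
  imports "HOL-Analysis.Analysis" "HOL-Library.Extended_Real"
begin

text \<open>Real power with the convention 0^0 = 1 (Isabelle's powr has 0 powr 0 = 0).\<close>
definition pow0 :: "real \<Rightarrow> real \<Rightarrow> real" where
  "pow0 x a = (if x = 0 then (if a = 0 then 1 else 0) else x powr a)"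

definition spec_norm :: "real^'n^'m \<Rightarrow> real" where
  "spec_norm A = onorm (\<lambda>x. A *v x)"

definition mp_pinv :: "real^'n^'m \<Rightarrow> real^'m^'n" where
  "mp_pinv X = (THE Y. X ** Y ** X = X \<and> Y ** X ** Y = Y \<and>
                  transpose (X ** Y) = X ** Y \<and> transpose (Y ** X) = Y ** X)"

definition damped_pinv :: "ereal \<Rightarrow> real^'n^'m \<Rightarrow> real^'m^'n" where
  "damped_pinv lam A = (if lam = \<infinity> then 0
     else transpose A ** mp_pinv (A ** transpose A + ((real_of_ereal lam)\<^sup>2) *\<^sub>R mat 1))"

text \<open>sigma 1 \<ge> ... \<ge> sigma l \<ge> 0 (1-indexed, l = min m n) are the singular values of A:
  A = U D V^T with U, V orthogonal and D the m x n "diagonal" matrix with diagonal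
  sigma 1, ..., sigma l, rows/columns numbered 1..m and 1..n by bijections em, en.\<close>
definition singular_values :: "real^'n^'m \<Rightarrow> (nat \<Rightarrow> real) \<Rightarrow> bool" where
  "singular_values A \<sigma> \<longleftrightarrow>
     (let l = min CARD('m) CARD('n) in
       (\<forall>i\<in>{1..l}. 0 \<le> \<sigma> i) \<and> (\<forall>i\<in>{1..l}. \<forall>j\<in>{1..l}. i \<le> j \<longrightarrow> \<sigma> j \<le> \<sigma> i) \<and>
       (\<exists>(U::real^'m^'m) (V::real^'n^'n) (em::'m \<Rightarrow> nat) (en::'n \<Rightarrow> nat).
          orthogonal_matrix U \<and> orthogonal_matrix V \<and>
          bij_betw em UNIV {1..CARD('m)} \<and> bij_betw en UNIV {1..CARD('n)} \<and>
          A = U ** (\<chi> i j. if em i = en j then \<sigma> (em i) else 0) ** transpose V))"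

end

theory Submission
  imports Defs
begin

text \<open>
  Write \<open>A = U D V\<^sup>T\<close> with \<open>U\<close>, \<open>V\<close> orthogonal and \<open>D\<close> carrying \<open>\<sigma>\<^sub>1, \<dots>, \<sigma>\<^sub>l\<close> on its
  diagonal. Then \<open>A\<^sup>T (A A\<^sup>T + t\<^sup>2 I)\<^sup>+ = V G U\<^sup>T\<close>, where \<open>G\<close> is the transposed diagonal
  pattern with entries \<open>\<sigma>\<^sub>k / (\<sigma>\<^sub>k\<^sup>2 + t\<^sup>2)\<close>, so its spectral norm is bounded by every common
  bound of these entries. For \<open>\<sigma>\<^sub>k \<noteq> 0\<close> the entry is at most \<open>1/\<sigma>\<^sub>k \<le> 1/\<sigma>\<^sub>r\<close>, since the
  nonzero singular values are exactly \<open>\<sigma>\<^sub>1, \<dots>, \<sigma>\<^sub>r\<close>; by AM-GM it is at most \<open>1/(2t)\<close>.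
  If \<open>|A A\<^sup>T|\<^sup>\<nu> > 0\<close>, then \<open>|A A\<^sup>T|\<^sup>\<nu> = (\<Prod>\<^sub>i \<sigma>\<^sub>i\<^sup>\<nu>)\<^sup>2\<close>, so \<open>1/(2\<lambda>) = \<Prod>\<^sub>i \<sigma>\<^sub>i\<^sup>\<nu> / (2\<mu>)\<close>;
  finally \<open>\<sigma>\<^sub>i \<le> \<parallel>A\<parallel>\<close>.
\<close>

lemma penrose_conditions_unique:
  fixes X :: "real^'n^'m" and Y Z :: "real^'m^'n"
  assumes y1: "X ** Y ** X = X" and y2: "Y ** X ** Y = Y"
      and y3: "transpose (X ** Y) = X ** Y" and y4: "transpose (Y ** X) = Y ** X"
      and z1: "X ** Z ** X = X" and z2: "Z ** X ** Z = Z"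
      and z3: "transpose (X ** Z) = X ** Z" and z4: "transpose (Z ** X) = Z ** X"
  shows "Y = Z"
proof -
  have XY: "X ** Y = X ** Z"
  proof -
    have "X ** Y = transpose ((X ** Z) ** (X ** Y))"
      using y3 z1 by (simp add: matrix_mul_assoc)
    also have "\<dots> = (X ** Y ** X) ** Z"
      using y3 z3 by (simp add: matrix_transpose_mul matrix_mul_assoc)
    finally show ?thesis using y1 by simp
  qed
  have YX: "Y ** X = Z ** X"
  proof -
    have "Y ** X = transpose ((Y ** X) ** (Z ** X))"
      using y4 z1 by (metis matrix_mul_assoc)
    also have "\<dots> = Z ** (X ** Y ** X)"
      using y4 z4 by (simp add: matrix_transpose_mul matrix_mul_assoc)
    finally show ?thesis using y1 by simp
  qed
  have "Y = Y ** (X ** Z)" using y2 XY by (metis matrix_mul_assoc)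
  also have "\<dots> = Z ** X ** Z" using YX by (metis matrix_mul_assoc)
  finally show ?thesis using z2 by simp
qed

lemma mp_pinv_eqI:
  fixes X :: "real^'n^'m" and Y :: "real^'m^'n"
  assumes "X ** Y ** X = X" "Y ** X ** Y = Y"
    "transpose (X ** Y) = X ** Y" "transpose (Y ** X) = Y ** X"
  shows "mp_pinv X = Y"
  unfolding mp_pinv_def
  using assms penrose_conditions_unique by (intro the_equality) blast+

definition diag_mat :: "('n \<Rightarrow> real) \<Rightarrow> real^'n^'n" where
  "diag_mat d = (\<chi> i j. if i = j then d i else 0)"

definition rect_diag :: "('m \<Rightarrow> nat) \<Rightarrow> ('n \<Rightarrow> nat) \<Rightarrow> (nat \<Rightarrow> real) \<Rightarrow> real^'n^'m" where
  "rect_diag em en h = (\<chi> i j. if em i = en j then h (em i) else 0)"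

lemma matrix_add_rdistrib: "(A + B) ** C = A ** C + B ** (C::real^'p^'n)"
  for A B :: "real^'n^'m"
  by (vector matrix_matrix_mult_def sum.distrib[symmetric] field_simps)

lemma diag_mat_mult: "diag_mat a ** diag_mat b = diag_mat (\<lambda>i. a i * b i)"
proof -
  have "(\<Sum>k\<in>UNIV. (if i = k then a i else 0) * (if k = j then b k else 0))
      = (\<Sum>k\<in>UNIV. if k = i then (if i = j then a i * b i else 0) else 0)" for i j
    by (intro sum.cong) auto
  then show ?thesis by (simp add: diag_mat_def matrix_matrix_mult_def vec_eq_iff)
qed

lemma transpose_diag_mat: "transpose (diag_mat d) = diag_mat d"
  by (simp add: diag_mat_def transpose_def vec_eq_iff)

lemma diag_mat_add_scaleR_mat: "diag_mat d + c *\<^sub>R mat 1 = diag_mat (\<lambda>i. d i + c)"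
  by (simp add: vec_eq_iff diag_mat_def mat_def)

lemma det_diag_mat: "det (diag_mat d) = (\<Prod>i\<in>UNIV. d i)"
  by (subst det_diagonal) (auto simp: diag_mat_def)

lemma transpose_rect_diag: "transpose (rect_diag em en h) = rect_diag en em h"
  by (simp add: rect_diag_def transpose_def vec_eq_iff eq_commute)

lemma rect_diag_cong:
  assumes "\<And>i j. em i = en j \<Longrightarrow> h (em i) = g (em i)"
  shows "rect_diag em en h = rect_diag em en g"
  using assms by (simp add: rect_diag_def vec_eq_iff)

lemma sum_if_inj_eq:
  fixes f :: "'n::finite \<Rightarrow> real"
  assumes "inj en"
  shows "(\<Sum>j\<in>UNIV. if k = en j then f j else 0) = (if k \<in> range en then f (inv en k) else 0)"
proof (cases "k \<in> range en")
  case True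
  then obtain j0 where j0: "k = en j0" by blast
  have "(\<Sum>j\<in>UNIV. if k = en j then f j else 0) = (\<Sum>j\<in>UNIV. if j = j0 then f j else 0)"
    using assms j0 by (intro sum.cong) (auto simp: inj_eq)
  then show ?thesis using assms j0 by simp
qed (auto intro!: sum.neutral)

lemma rect_diag_mult_vec_nth:
  assumes "inj en"
  shows "(rect_diag em en h *v x)$i = (if em i \<in> range en then h (em i) * x$(inv en (em i)) else 0)"
proof -
  have "(rect_diag em en h *v x)$i = (\<Sum>j\<in>UNIV. if em i = en j then h (em i) * x$j else 0)"
    by (simp add: rect_diag_def matrix_vector_mult_def) (rule sum.cong, auto)
  then show ?thesis using sum_if_inj_eq[OF assms] by simp
qed

lemma rect_diag_mult_transpose:
  assumes "inj em" "inj en"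
  shows "rect_diag em en h ** transpose (rect_diag em en h)
    = diag_mat (\<lambda>i. if em i \<in> range en then (h (em i))\<^sup>2 else 0)"
proof -
  have diag: "(\<Sum>j\<in>UNIV. (if em i = en j then h (em i) else 0) * (if em i = en j then h (em i) else 0))
      = (if em i \<in> range en then (h (em i))\<^sup>2 else 0)" for i
  proof -
    have "(\<Sum>j\<in>UNIV. (if em i = en j then h (em i) else 0) * (if em i = en j then h (em i) else 0))
        = (\<Sum>j\<in>UNIV. if em i = en j then (h (em i))\<^sup>2 else 0)"
      by (intro sum.cong) (auto simp: power2_eq_square)
    then show ?thesis using sum_if_inj_eq[OF assms(2), of "em i"] by simp
  qed
  have "(\<Sum>j\<in>UNIV. (if em i = en j then h (em i) else 0) * (if em i' = en j then h (em i') else 0))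
      = (if i = i' then if em i \<in> range en then (h (em i))\<^sup>2 else 0 else 0)" for i i'
  proof (cases "i = i'")
    case False
    then have "em i \<noteq> em i'" using assms(1) by (auto simp: inj_eq)
    with False show ?thesis by (auto intro!: sum.neutral)
  qed (simp only: diag if_True refl)
  then show ?thesis
    by (simp add: rect_diag_def diag_mat_def matrix_matrix_mult_def transpose_def vec_eq_iff)
qed

lemma rect_diag_mult_diag_mat:
  "rect_diag em en h ** diag_mat (\<lambda>j. f (en j)) = rect_diag em en (\<lambda>k. h k * f k)"
proof -
  have "(\<Sum>k\<in>UNIV. (if em i = en k then h (em i) else 0) * (if k = j then f (en k) else 0))
      = (\<Sum>k\<in>UNIV. if k = j then (if em i = en j then h (em i) * f (em i) else 0) else 0)" for i j
    by (intro sum.cong) auto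
  then show ?thesis by (simp add: rect_diag_def diag_mat_def matrix_matrix_mult_def vec_eq_iff)
qed

lemma mp_pinv_orthogonal_diag:
  fixes U :: "real^'n^'n"
  assumes U: "orthogonal_matrix U"
  shows "mp_pinv (U ** diag_mat e ** transpose U) = U ** diag_mat (\<lambda>i. inverse (e i)) ** transpose U"
proof -
  have conj_mult: "(U ** P ** transpose U) ** (U ** Q ** transpose U) = U ** (P ** Q) ** transpose U"
    for P Q
  proof -
    have "(U ** P ** transpose U) ** (U ** Q ** transpose U)
        = U ** (P ** ((transpose U ** U) ** Q)) ** transpose U"
      by (simp only: matrix_mul_assoc)
    then show ?thesis using U by (simp add: orthogonal_matrix_def)
  qed
  have transpose_conj: "transpose (U ** P ** transpose U) = U ** transpose P ** transpose U" for P
    by (simp add: matrix_transpose_mul matrix_mul_assoc)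
  \<comment> \<open>\<open>inverse 0 = 0\<close> keeps zero eigenvalues at zero, as the pseudoinverse requires\<close>
  have cancel: "e i * inverse (e i) * e i = e i"
    "inverse (e i) * e i * inverse (e i) = inverse (e i)" for i
    by (cases "e i = 0"; simp)+
  show ?thesis
    by (intro mp_pinv_eqI)
      (simp_all only: conj_mult transpose_conj diag_mat_mult transpose_diag_mat cancel)
qed

lemma spec_norm_le:
  assumes "\<And>x. norm (M *v x) \<le> b * norm x"
  shows "spec_norm M \<le> b"
  unfolding spec_norm_def using assms by (rule onorm_le)

lemma norm_mult_le_spec_norm: "norm (M *v x) \<le> spec_norm M * norm x"
  unfolding spec_norm_def by (rule onorm) simp

lemma spec_norm_nonneg: "0 \<le> spec_norm M"
  unfolding spec_norm_def by (rule onorm_pos_le) simp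

lemma spec_norm_zero [simp]: "spec_norm (0::real^'n^'m) = 0"
proof -
  have "(\<lambda>x. (0::real^'n^'m) *v x) = (\<lambda>x. 0)" by auto
  then show ?thesis unfolding spec_norm_def by (simp only: onorm_zero)
qed

lemma norm_orthogonal_matrix_mult:
  fixes U :: "real^'n^'n"
  assumes "orthogonal_matrix U"
  shows "norm (U *v x) = norm x"
proof -
  have "orthogonal_transformation ((*v) U)"
    using assms by (simp add: orthogonal_transformation_matrix)
  then show ?thesis by (rule orthogonal_transformation_norm)
qed

lemma spec_norm_orthogonal_sandwich_le:
  fixes M :: "real^'n^'m" and U :: "real^'n^'n" and V :: "real^'m^'m"
  assumes "orthogonal_matrix U" "orthogonal_matrix V"
  shows "spec_norm (V ** M ** transpose U) \<le> spec_norm M"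
proof (rule spec_norm_le)
  fix x
  have "norm ((V ** M ** transpose U) *v x) = norm (M *v (transpose U *v x))"
    using assms(2) by (simp add: matrix_vector_mul_assoc[symmetric] norm_orthogonal_matrix_mult)
  also have "\<dots> \<le> spec_norm M * norm (transpose U *v x)"
    by (rule norm_mult_le_spec_norm)
  also have "norm (transpose U *v x) = norm x"
    using assms(1) norm_orthogonal_matrix_mult[of "transpose U"] by (simp del: transpose_matrix_vector)
  finally show "norm ((V ** M ** transpose U) *v x) \<le> spec_norm M * norm x" .
qed

lemma sum_matching_le:
  fixes f :: "'n::finite \<Rightarrow> real" and em :: "'m::finite \<Rightarrow> 'a"
  assumes "inj em" "\<And>j. 0 \<le> f j"
  shows "(\<Sum>i\<in>UNIV. \<Sum>j\<in>UNIV. if em i = en j then f j else 0) \<le> (\<Sum>j\<in>UNIV. f j)"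
proof -
  have "(\<Sum>i\<in>UNIV. \<Sum>j\<in>UNIV. if em i = en j then f j else 0)
      = (\<Sum>j\<in>UNIV. \<Sum>i\<in>UNIV. if en j = em i then f j else 0)"
    by (subst sum.swap) (simp only: eq_commute)
  also have "\<dots> = (\<Sum>j\<in>UNIV. if en j \<in> range em then f j else 0)"
    by (simp only: sum_if_inj_eq[OF assms(1)])
  also have "\<dots> \<le> (\<Sum>j\<in>UNIV. f j)"
    using assms(2) by (intro sum_mono) simp
  finally show ?thesis .
qed

lemma spec_norm_rect_diag_le:
  fixes em :: "'m::finite \<Rightarrow> nat" and en :: "'n::finite \<Rightarrow> nat"
  assumes "inj em" "inj en" "0 \<le> b" and h_le: "\<And>i j. em i = en j \<Longrightarrow> \<bar>h (em i)\<bar> \<le> b"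
  shows "spec_norm (rect_diag em en h) \<le> b"
proof (rule spec_norm_le)
  fix x :: "real^'n"
  have norm_sq: "(norm y)\<^sup>2 = (\<Sum>i\<in>UNIV. (y$i)\<^sup>2)" for y :: "real^'k"
    unfolding power2_norm_eq_inner inner_vec_def by (simp add: power2_eq_square)
  have entry_le: "((rect_diag em en h *v x)$i)\<^sup>2
      \<le> b\<^sup>2 * (\<Sum>j\<in>UNIV. if em i = en j then (x$j)\<^sup>2 else 0)" for i
  proof (cases "em i \<in> range en")
    case True
    then obtain j where j: "em i = en j" by blast
    then have "inv en (em i) = j" using assms(2) by (simp add: inv_f_f)
    have "(h (em i))\<^sup>2 \<le> b\<^sup>2"
      using h_le[OF j] \<open>0 \<le> b\<close> by (simp add: power2_le_iff_abs_le)
    then have "(h (em i) * x$j)\<^sup>2 \<le> b\<^sup>2 * (x$j)\<^sup>2"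
      by (simp add: power_mult_distrib mult_right_mono)
    then show ?thesis
      using True j \<open>inv en (em i) = j\<close>
      by (simp add: rect_diag_mult_vec_nth[OF assms(2)] sum_if_inj_eq[OF assms(2)])
  qed (simp add: rect_diag_mult_vec_nth[OF assms(2)] sum_if_inj_eq[OF assms(2)])
  have "(norm (rect_diag em en h *v x))\<^sup>2
      \<le> (\<Sum>i\<in>UNIV. b\<^sup>2 * (\<Sum>j\<in>UNIV. if em i = en j then (x$j)\<^sup>2 else 0))"
    unfolding norm_sq by (rule sum_mono) (rule entry_le)
  also have "\<dots> \<le> b\<^sup>2 * (\<Sum>j\<in>UNIV. (x$j)\<^sup>2)"
    unfolding sum_distrib_left[symmetric]
    by (intro mult_left_mono sum_matching_le[OF assms(1)]) simp_all
  finally have "(norm (rect_diag em en h *v x))\<^sup>2 \<le> (b * norm x)\<^sup>2"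
    unfolding norm_sq[of x] power_mult_distrib .
  then show "norm (rect_diag em en h *v x) \<le> b * norm x"
    by (rule power2_le_imp_le) (simp add: \<open>0 \<le> b\<close>)
qed

lemma div_sum_squares_le_inverse:
  fixes s t :: real
  assumes "0 < s"
  shows "s / (s\<^sup>2 + t\<^sup>2) \<le> 1 / s"
proof -
  have "s / (s\<^sup>2 + t\<^sup>2) \<le> s / s\<^sup>2"
    using assms by (intro divide_left_mono) (auto intro!: mult_pos_pos add_pos_nonneg)
  also have "\<dots> = 1 / s" by (simp add: power2_eq_square)
  finally show ?thesis .
qed

lemma div_sum_squares_le_half_inverse:
  fixes s t :: real
  assumes "0 \<le> s" "0 < t"
  shows "s / (s\<^sup>2 + t\<^sup>2) \<le> 1 / (2 * t)"
proof -
  have "2 * t * s \<le> s\<^sup>2 + t\<^sup>2"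
    using sum_power2_ge_zero[of "s - t" 0] by (simp add: power2_eq_square algebra_simps)
  moreover have "0 < s\<^sup>2 + t\<^sup>2" using assms by (simp add: add_nonneg_pos)
  ultimately show ?thesis using assms by (simp add: field_simps)
qed

lemma pow0_nonneg: "0 \<le> pow0 x a"
  by (simp add: pow0_def)

lemma pow0_zero_right [simp]: "pow0 x 0 = 1"
  by (simp add: pow0_def)

lemma pow0_mult:
  assumes "0 \<le> x" "0 \<le> y"
  shows "pow0 (x * y) a = pow0 x a * pow0 y a"
  using assms by (auto simp: pow0_def powr_mult)

lemma pow0_prod:
  assumes "\<And>k. k \<in> K \<Longrightarrow> 0 \<le> x k"
  shows "pow0 (\<Prod>k\<in>K. x k) a = (\<Prod>k\<in>K. pow0 (x k) a)"
  using assms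
proof (induction K rule: infinite_finite_induct)
  case (insert k K)
  then show ?case by (simp add: pow0_mult prod_nonneg)
qed (simp_all add: pow0_def)

lemma pow0_square:
  assumes "0 \<le> x"
  shows "pow0 (x\<^sup>2) a = (pow0 x a)\<^sup>2"
  using pow0_mult[OF assms assms] by (simp add: power2_eq_square)

lemma pow0_power:
  assumes "0 \<le> x"
  shows "(pow0 x a) ^ n = pow0 x (a * real n)"
proof (cases "x = 0")
  case True
  then show ?thesis by (cases "a = 0"; cases n) (simp_all add: pow0_def)
next
  case False
  then show ?thesis using assms by (simp add: pow0_def powr_realpow[symmetric] powr_powr)
qed

lemma pow0_mono:
  assumes "0 \<le> x" "x \<le> y" "0 \<le> a"
  shows "pow0 x a \<le> pow0 y a"
  using assms by (cases "a = 0") (auto simp: pow0_def powr_mono2)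

lemma rank_orthogonal_sandwich:
  fixes M :: "real^'n^'m" and U :: "real^'m^'m" and V :: "real^'n^'n"
  assumes "orthogonal_matrix U" "orthogonal_matrix V"
  shows "rank (U ** M ** transpose V) = rank M"
proof (rule antisym)
  show "rank (U ** M ** transpose V) \<le> rank M"
    by (meson order_trans rank_mul_le_left rank_mul_le_right)
  have "transpose U ** (U ** M ** transpose V) ** V = (transpose U ** U) ** M ** (transpose V ** V)"
    by (simp only: matrix_mul_assoc)
  then have "M = transpose U ** (U ** M ** transpose V) ** V"
    using assms by (simp add: orthogonal_matrix_def)
  then show "rank M \<le> rank (U ** M ** transpose V)"
    by (metis order_trans rank_mul_le_left rank_mul_le_right)
qed

lemma rank_rect_diag:
  fixes em :: "'m::finite \<Rightarrow> nat" and en :: "'n::finite \<Rightarrow> nat"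
  assumes em: "inj em" and en: "inj en"
  shows "rank (rect_diag em en h) = card {k \<in> range em \<inter> range en. h k \<noteq> 0}"
proof -
  define I where "I = {i. em i \<in> range en \<and> h (em i) \<noteq> 0}"
  note entry = rect_diag_mult_vec_nth[OF en]
  have "range ((*v) (rect_diag em en h)) = {y. \<forall>i. i \<notin> I \<longrightarrow> y$i = 0}"
  proof (intro antisym subsetI)
    fix y :: "real^'m"
    assume "y \<in> {y. \<forall>i. i \<notin> I \<longrightarrow> y$i = 0}"
    then have y: "\<And>i. i \<notin> I \<Longrightarrow> y$i = 0" by simp
    define x :: "real^'n"
      where "x = (\<chi> j. if en j \<in> range em then y$(inv em (en j)) / h (en j) else 0)"
    have "rect_diag em en h *v x = y"
    proof (rule vec_eq_iff[THEN iffD2], rule allI)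
      fix i
      show "(rect_diag em en h *v x)$i = y$i"
      proof (cases "em i \<in> range en")
        case True
        then obtain j where j: "en j = em i" by auto
        then have "inv en (em i) = j" "inv em (em i) = i" using em en by (metis inv_f_f)+
        then show ?thesis using True y[of i] j by (auto simp: entry x_def I_def)
      qed (use y in \<open>auto simp: entry I_def\<close>)
    qed
    then show "y \<in> range ((*v) (rect_diag em en h))" by blast
  qed (auto simp: entry I_def)
  then have "rank (rect_diag em en h) = card I"
    unfolding rank_dim_range dim_vec_eq[symmetric] by (simp add: dim_substandard_cart)
  also have "\<dots> = card (em ` I)"
    using em by (simp add: card_image inj_on_subset)
  also have "em ` I = {k \<in> range em \<inter> range en. h k \<noteq> 0}"
    by (auto simp: I_def)
  finally show ?thesis .
qed

lemma down_closed_eq_atLeastAtMost_card: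
  fixes S :: "nat set"
  assumes "finite S" "\<And>k. k \<in> S \<Longrightarrow> 1 \<le> k" "\<And>k j. k \<in> S \<Longrightarrow> 1 \<le> j \<Longrightarrow> j \<le> k \<Longrightarrow> j \<in> S"
  shows "S = {1..card S}"
proof (cases "S = {}")
  case False
  have "S = {1..Max S}"
  proof
    show "S \<subseteq> {1..Max S}" using assms(1,2) by auto
    show "{1..Max S} \<subseteq> S" using assms(3)[OF Max_in[OF assms(1) False]] by auto
  qed
  moreover from this have "card S = Max S" by (metis card_atLeastAtMost diff_Suc_1)
  ultimately show ?thesis by metis
qed simp

locale singular_value_decomposition =
  fixes A :: "real^'n^'m" and \<sigma> :: "nat \<Rightarrow> real"
    and U :: "real^'m^'m" and V :: "real^'n^'n" and em :: "'m \<Rightarrow> nat" and en :: "'n \<Rightarrow> nat"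
  assumes orthogonal_U: "orthogonal_matrix U" and orthogonal_V: "orthogonal_matrix V"
    and bij_em: "bij_betw em UNIV {1..CARD('m)}" and bij_en: "bij_betw en UNIV {1..CARD('n)}"
    and A_eq: "A = U ** rect_diag em en \<sigma> ** transpose V"
    and sigma_nonneg: "\<And>k. k \<in> {1..min CARD('m) CARD('n)} \<Longrightarrow> 0 \<le> \<sigma> k"
    and sigma_antimono: "\<And>i j. i \<in> {1..min CARD('m) CARD('n)} \<Longrightarrow> j \<in> {1..min CARD('m) CARD('n)}
      \<Longrightarrow> i \<le> j \<Longrightarrow> \<sigma> j \<le> \<sigma> i"
begin

lemma inj_em: "inj em" and inj_en: "inj en"
  and range_em: "range em = {1..CARD('m)}" and range_en: "range en = {1..CARD('n)}"
  using bij_em bij_en by (auto simp: bij_betw_def)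

lemma A_mult_transpose:
  "A ** transpose A = U ** diag_mat (\<lambda>i. if em i \<le> CARD('n) then (\<sigma> (em i))\<^sup>2 else 0) ** transpose U"
proof -
  have "A ** transpose A
      = U ** (rect_diag em en \<sigma> ** ((transpose V ** V) ** transpose (rect_diag em en \<sigma>)))
          ** transpose U"
    unfolding A_eq by (simp only: matrix_transpose_mul transpose_transpose matrix_mul_assoc)
  also have "\<dots> = U ** diag_mat (\<lambda>i. if em i \<in> range en then (\<sigma> (em i))\<^sup>2 else 0) ** transpose U"
    using orthogonal_V by (simp add: orthogonal_matrix_def rect_diag_mult_transpose[OF inj_em inj_en])
  also have "(\<lambda>i. if em i \<in> range en then (\<sigma> (em i))\<^sup>2 else 0)
      = (\<lambda>i. if em i \<le> CARD('n) then (\<sigma> (em i))\<^sup>2 else 0)"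
    using range_em range_en by (force simp: fun_eq_iff)
  finally show ?thesis .
qed

lemma regularized_pinv_eq:
  "transpose A ** mp_pinv (A ** transpose A + t\<^sup>2 *\<^sub>R mat 1)
    = V ** rect_diag en em (\<lambda>k. \<sigma> k / ((\<sigma> k)\<^sup>2 + t\<^sup>2)) ** transpose U"
proof -
  define d where "d k = (if k \<le> CARD('n) then (\<sigma> k)\<^sup>2 else 0) + t\<^sup>2" for k
  have "A ** transpose A + t\<^sup>2 *\<^sub>R mat 1
      = U ** (diag_mat (\<lambda>i. d (em i) - t\<^sup>2) + t\<^sup>2 *\<^sub>R mat 1) ** transpose U"
    using orthogonal_U
    by (simp add: A_mult_transpose d_def matrix_add_ldistrib matrix_add_rdistrib orthogonal_matrix_def
        matrix_scalar_ac scalar_matrix_assoc[symmetric])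
  also have "diag_mat (\<lambda>i. d (em i) - t\<^sup>2) + t\<^sup>2 *\<^sub>R mat 1 = diag_mat (\<lambda>i. d (em i))"
    by (simp add: diag_mat_add_scaleR_mat)
  finally have system:
    "A ** transpose A + t\<^sup>2 *\<^sub>R mat 1 = U ** diag_mat (\<lambda>i. d (em i)) ** transpose U" .
  have "transpose A ** mp_pinv (A ** transpose A + t\<^sup>2 *\<^sub>R mat 1)
      = transpose A ** (U ** diag_mat (\<lambda>i. inverse (d (em i))) ** transpose U)"
    unfolding system mp_pinv_orthogonal_diag[OF orthogonal_U] ..
  also have "\<dots> = V ** (transpose (rect_diag em en \<sigma>) ** ((transpose U ** U)
          ** diag_mat (\<lambda>i. inverse (d (em i))))) ** transpose U"
    unfolding A_eq by (simp only: matrix_transpose_mul transpose_transpose matrix_mul_assoc)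
  also have "\<dots> = V ** rect_diag en em (\<lambda>k. \<sigma> k * inverse (d k)) ** transpose U"
    using orthogonal_U
    by (simp add: orthogonal_matrix_def transpose_rect_diag
        rect_diag_mult_diag_mat[of en em \<sigma> "\<lambda>k. inverse (d k)"])
  also have "rect_diag en em (\<lambda>k. \<sigma> k * inverse (d k)) = rect_diag en em (\<lambda>k. \<sigma> k / ((\<sigma> k)\<^sup>2 + t\<^sup>2))"
  proof (rule rect_diag_cong)
    fix j
    have "en j \<le> CARD('n)" using range_en by (metis atLeastAtMost_iff rangeI)
    then show "\<sigma> (en j) * inverse (d (en j)) = \<sigma> (en j) / ((\<sigma> (en j))\<^sup>2 + t\<^sup>2)"
      by (simp add: d_def divide_inverse)
  qed
  finally show ?thesis .
qed

lemma range_em_inter_range_en: "range em \<inter> range en = {1..min CARD('m) CARD('n)}"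
  using range_em range_en by auto

lemma spec_norm_regularized_pinv_le:
  assumes "0 \<le> b" "\<And>k. k \<in> {1..min CARD('m) CARD('n)} \<Longrightarrow> \<sigma> k / ((\<sigma> k)\<^sup>2 + t\<^sup>2) \<le> b"
  shows "spec_norm (transpose A ** mp_pinv (A ** transpose A + t\<^sup>2 *\<^sub>R mat 1)) \<le> b"
proof -
  have "spec_norm (rect_diag en em (\<lambda>k. \<sigma> k / ((\<sigma> k)\<^sup>2 + t\<^sup>2))) \<le> b"
  proof (rule spec_norm_rect_diag_le[OF inj_en inj_em \<open>0 \<le> b\<close>])
    fix i j
    assume "en i = em j"
    then have "en i \<in> {1..min CARD('m) CARD('n)}"
      using range_em_inter_range_en by (metis IntI rangeI)
    then show "\<bar>\<sigma> (en i) / ((\<sigma> (en i))\<^sup>2 + t\<^sup>2)\<bar> \<le> b"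
      using assms(2) sigma_nonneg by simp
  qed
  then show ?thesis
    unfolding regularized_pinv_eq
    using spec_norm_orthogonal_sandwich_le[OF orthogonal_U orthogonal_V] by (rule order_trans[rotated])
qed

lemma rank_eq_card_nonzero_sigma: "rank A = card {k \<in> {1..min CARD('m) CARD('n)}. \<sigma> k \<noteq> 0}"
  unfolding A_eq rank_orthogonal_sandwich[OF orthogonal_U orthogonal_V]
    rank_rect_diag[OF inj_em inj_en] range_em_inter_range_en ..

lemma nonzero_sigma_eq: "{k \<in> {1..min CARD('m) CARD('n)}. \<sigma> k \<noteq> 0} = {1..rank A}"
  unfolding rank_eq_card_nonzero_sigma
proof (rule down_closed_eq_atLeastAtMost_card)
  fix k j
  assume k: "k \<in> {k \<in> {1..min CARD('m) CARD('n)}. \<sigma> k \<noteq> 0}" and j: "1 \<le> j" "j \<le> k"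
  then have "\<sigma> k \<le> \<sigma> j" "0 \<le> \<sigma> k" by (auto intro: sigma_antimono sigma_nonneg)
  then show "j \<in> {k \<in> {1..min CARD('m) CARD('n)}. \<sigma> k \<noteq> 0}" using k j by auto
qed auto

lemma rank_in_sigma_range:
  assumes "A \<noteq> 0"
  shows "rank A \<in> {1..min CARD('m) CARD('n)}" and "0 < \<sigma> (rank A)"
proof -
  have "rank A \<in> {1..rank A}" using assms rank_eq_0[of A] by simp
  then have "rank A \<in> {1..min CARD('m) CARD('n)}" "\<sigma> (rank A) \<noteq> 0"
    unfolding nonzero_sigma_eq[symmetric] by auto
  then show "rank A \<in> {1..min CARD('m) CARD('n)}" "0 < \<sigma> (rank A)"
    using sigma_nonneg by force+
qed

lemma spec_norm_regularized_pinv_le_rank: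
  "spec_norm (transpose A ** mp_pinv (A ** transpose A + t\<^sup>2 *\<^sub>R mat 1))
    \<le> (if A = 0 then 0 else 1 / \<sigma> (rank A))"
proof (cases "A = 0")
  case True
  have "transpose (0::real^'n^'m) = 0" by (simp add: transpose_def vec_eq_iff)
  with True show ?thesis by simp
next
  case False
  note r_range = rank_in_sigma_range(1)[OF False] and r_pos = rank_in_sigma_range(2)[OF False]
  have "spec_norm (transpose A ** mp_pinv (A ** transpose A + t\<^sup>2 *\<^sub>R mat 1)) \<le> 1 / \<sigma> (rank A)"
  proof (rule spec_norm_regularized_pinv_le)
    show "0 \<le> 1 / \<sigma> (rank A)" using r_pos by simp
    fix k
    assume k: "k \<in> {1..min CARD('m) CARD('n)}"
    show "\<sigma> k / ((\<sigma> k)\<^sup>2 + t\<^sup>2) \<le> 1 / \<sigma> (rank A)"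
    proof (cases "\<sigma> k = 0")
      case False
      with k have "k \<in> {1..rank A}" unfolding nonzero_sigma_eq[symmetric] by simp
      then have "\<sigma> (rank A) \<le> \<sigma> k" using k r_range sigma_antimono by simp
      have "\<sigma> k / ((\<sigma> k)\<^sup>2 + t\<^sup>2) \<le> 1 / \<sigma> k"
        using r_pos \<open>\<sigma> (rank A) \<le> \<sigma> k\<close> by (intro div_sum_squares_le_inverse) simp
      also have "\<dots> \<le> 1 / \<sigma> (rank A)"
        using r_pos \<open>\<sigma> (rank A) \<le> \<sigma> k\<close> by (intro divide_left_mono) auto
      finally show ?thesis .
    qed (use r_pos in simp)
  qed
  with False show ?thesis by simp
qed

lemma spec_norm_regularized_pinv_le_half_inverse:
  assumes "0 < t"
  shows "spec_norm (transpose A ** mp_pinv (A ** transpose A + t\<^sup>2 *\<^sub>R mat 1)) \<le> 1 / (2 * t)"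
  using assms
  by (intro spec_norm_regularized_pinv_le div_sum_squares_le_half_inverse sigma_nonneg) simp_all

lemma det_A_mult_transpose:
  "det (A ** transpose A) = (\<Prod>k\<in>{1..CARD('m)}. if k \<le> CARD('n) then (\<sigma> k)\<^sup>2 else 0)"
proof -
  have "det (A ** transpose A) = det (diag_mat (\<lambda>i. if em i \<le> CARD('n) then (\<sigma> (em i))\<^sup>2 else 0))"
    using det_orthogonal_matrix[OF orthogonal_U] by (auto simp: A_mult_transpose det_mul)
  also have "\<dots> = (\<Prod>i\<in>UNIV. (\<lambda>k. if k \<le> CARD('n) then (\<sigma> k)\<^sup>2 else 0) (em i))"
    by (simp add: det_diag_mat)
  also have "\<dots> = (\<Prod>k\<in>{1..CARD('m)}. if k \<le> CARD('n) then (\<sigma> k)\<^sup>2 else 0)"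
    by (rule prod.reindex_bij_betw[OF bij_em])
  finally show ?thesis .
qed

lemma pow0_det_A_mult_transpose:
  assumes "0 < pow0 (det (A ** transpose A)) \<nu>"
  shows "pow0 (det (A ** transpose A)) \<nu> = (\<Prod>k=1..min CARD('m) CARD('n). pow0 (\<sigma> k) \<nu>)\<^sup>2"
proof (cases "CARD('m) \<le> CARD('n)")
  case True
  then have "det (A ** transpose A) = (\<Prod>k=1..min CARD('m) CARD('n). (\<sigma> k)\<^sup>2)"
    by (simp add: det_A_mult_transpose)
  then show ?thesis
    using sigma_nonneg by (simp add: pow0_prod pow0_square prod_power_distrib)
next
  case False
  then have "det (A ** transpose A) = 0"
    unfolding det_A_mult_transpose by (intro prod_zero bexI[of _ "CARD('m)"]) auto
  with assms have "\<nu> = 0" by (simp add: pow0_def split: if_splits)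
  then show ?thesis by simp
qed

lemma sigma_le_spec_norm:
  assumes "k \<in> {1..min CARD('m) CARD('n)}"
  shows "\<sigma> k \<le> spec_norm A"
proof -
  obtain i j where i: "em i = k" and j: "en j = k"
    using assms range_em_inter_range_en by (metis IntD1 IntD2 rangeE)
  define x where "x = V *v axis j 1"
  have "A *v x = U *v (rect_diag em en \<sigma> *v ((transpose V ** V) *v axis j 1))"
    unfolding A_eq x_def by (simp add: matrix_vector_mul_assoc matrix_mul_assoc)
  then have Ax: "A *v x = U *v (rect_diag em en \<sigma> *v axis j 1)"
    using orthogonal_V by (simp add: orthogonal_matrix_def)
  have "(rect_diag em en \<sigma> *v axis j 1)$i = \<sigma> k"
    unfolding matrix_vector_mult_basis by (simp add: column_def rect_diag_def i j)
  then have "\<sigma> k \<le> norm (rect_diag em en \<sigma> *v axis j 1)"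
    by (metis component_le_norm_cart abs_ge_self order_trans)
  also have "\<dots> = norm (A *v x)"
    unfolding Ax norm_orthogonal_matrix_mult[OF orthogonal_U] ..
  also have "\<dots> \<le> spec_norm A * norm x"
    by (rule norm_mult_le_spec_norm)
  also have "norm x = 1"
    unfolding x_def norm_orthogonal_matrix_mult[OF orthogonal_V] by simp
  finally show ?thesis by simp
qed

lemma prod_pow0_sigma_le:
  assumes "0 \<le> \<nu>"
  shows "(\<Prod>k=1..min CARD('m) CARD('n). pow0 (\<sigma> k) \<nu>)
    \<le> pow0 (spec_norm A) (\<nu> * real (min CARD('m) CARD('n)))"
proof -
  have "(\<Prod>k=1..min CARD('m) CARD('n). pow0 (\<sigma> k) \<nu>)
      \<le> (\<Prod>k=1..min CARD('m) CARD('n). pow0 (spec_norm A) \<nu>)"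
  proof (rule prod_mono)
    fix k
    assume "k \<in> {1..min CARD('m) CARD('n)}"
    then show "0 \<le> pow0 (\<sigma> k) \<nu> \<and> pow0 (\<sigma> k) \<nu> \<le> pow0 (spec_norm A) \<nu>"
      using assms by (simp add: pow0_nonneg pow0_mono sigma_nonneg sigma_le_spec_norm)
  qed
  also have "\<dots> = pow0 (spec_norm A) (\<nu> * real (min CARD('m) CARD('n)))"
    by (simp add: pow0_power spec_norm_nonneg)
  finally show ?thesis .
qed

lemma spec_norm_damped_pinv_le_rank:
  "spec_norm (damped_pinv lam A) \<le> (if A = 0 then 0 else 1 / \<sigma> (rank A))"
proof (cases "lam = \<infinity>")
  case True
  then show ?thesis using rank_in_sigma_range(2) by (simp add: damped_pinv_def less_imp_le)
next
  case False
  then show ?thesis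
    unfolding damped_pinv_def using spec_norm_regularized_pinv_le_rank by simp
qed

lemma spec_norm_damped_pinv_le_prod:
  assumes "0 < \<mu>"
    and lam: "lam = (if 0 < pow0 (det (A ** transpose A)) \<nu>
      then ereal (sqrt (\<mu>\<^sup>2 / pow0 (det (A ** transpose A)) \<nu>)) else \<infinity>)"
  shows "spec_norm (damped_pinv lam A) \<le> 1 / (2 * \<mu>) * (\<Prod>k=1..min CARD('m) CARD('n). pow0 (\<sigma> k) \<nu>)"
    (is "_ \<le> _ * ?Q")
proof (cases "0 < pow0 (det (A ** transpose A)) \<nu>")
  case True
  then have det: "pow0 (det (A ** transpose A)) \<nu> = ?Q\<^sup>2"
    by (rule pow0_det_A_mult_transpose)
  moreover have "0 \<le> ?Q" by (intro prod_nonneg) (simp add: pow0_nonneg)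
  ultimately have "0 < ?Q" using True by (auto simp: less_le)
  have "lam = ereal (\<mu> / ?Q)"
    using lam True \<open>0 < \<mu>\<close> \<open>0 < ?Q\<close> by (simp add: det real_sqrt_divide)
  then have "spec_norm (damped_pinv lam A)
      = spec_norm (transpose A ** mp_pinv (A ** transpose A + (\<mu> / ?Q)\<^sup>2 *\<^sub>R mat 1))"
    by (simp add: damped_pinv_def)
  also have "\<dots> \<le> 1 / (2 * (\<mu> / ?Q))"
    using \<open>0 < \<mu>\<close> \<open>0 < ?Q\<close> by (intro spec_norm_regularized_pinv_le_half_inverse) simp
  also have "\<dots> = 1 / (2 * \<mu>) * ?Q" by simp
  finally show ?thesis .
next
  case False
  then show ?thesis
    using lam \<open>0 < \<mu>\<close> by (simp add: damped_pinv_def prod_nonneg pow0_nonneg)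
qed

end

theorem lemma7:
  fixes A :: "real^'n^'m" and \<mu> \<nu> :: real and \<sigma> :: "nat \<Rightarrow> real" and lam :: ereal
  assumes "\<mu> \<ge> 0" and "\<nu> \<ge> 0"
    and "lam = (if \<mu> = 0 then 0
                else if pow0 (det (A ** transpose A)) \<nu> > 0
                  then ereal (sqrt (\<mu>\<^sup>2 / pow0 (det (A ** transpose A)) \<nu>))
                else \<infinity>)"
    and "singular_values A \<sigma>"
  shows "ereal (spec_norm (damped_pinv lam A)) \<le>
           min (ereal (if A = 0 then 0 else 1 / \<sigma> (rank A)))
               (if \<mu> = 0 then \<infinity>
                else ereal (1 / (2 * \<mu>) * (\<Prod>i=1..min CARD('m) CARD('n). pow0 (\<sigma> i) \<nu>)))
         \<and> (\<mu> > 0 \<longrightarrow> spec_norm (damped_pinv lam A)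
           \<le> 1 / (2 * \<mu>) * pow0 (spec_norm A) (\<nu> * real (min CARD('m) CARD('n))))"
proof -
  obtain U V em en where "singular_value_decomposition A \<sigma> U V em en"
    using assms(4)
    unfolding singular_values_def singular_value_decomposition_def rect_diag_def Let_def by blast
  then interpret singular_value_decomposition A \<sigma> U V em en .
  have prod_bound: "spec_norm (damped_pinv lam A)
      \<le> 1 / (2 * \<mu>) * (\<Prod>i=1..min CARD('m) CARD('n). pow0 (\<sigma> i) \<nu>)" if "0 < \<mu>"
    using that assms(3) by (intro spec_norm_damped_pinv_le_prod) simp_all
  have "spec_norm (damped_pinv lam A)
      \<le> 1 / (2 * \<mu>) * pow0 (spec_norm A) (\<nu> * real (min CARD('m) CARD('n)))" if "0 < \<mu>"
    using order_trans[OF prod_bound[OF that] mult_left_mono[OF prod_pow0_sigma_le[OF assms(2)]]] that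
    by simp
  then show ?thesis
    using spec_norm_damped_pinv_le_rank prod_bound assms(1) by auto
qed

end
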